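(* Assume the standing setting and let $\epsilon>0$. If $|u^0_i-u^0_{i+1}|\le \epsilon/3^{M}$ for all $i\in\mathbb Z$, then for every coarse index $j$, $|v_0-u_0|\le\epsilon$, i.e. $|w^N_j-u^M_{jr}|\le\epsilon$.
   Context: Standing setting. Let $F:\mathbb R\to\mathbb R$ be continuously differentiable. For a spatial step $\eta>0$, a time step $\tau>0$ and an initial sequence $(z^0_i)_{i\in\mathbb Z}$ of reals, the EFC (Euler forward in time, centered in space) scheme produces $(z^n_i)_{i\in\mathbb Z,\,n\in\mathbb N}$ by $z^{n+1}_i=z^n_i-F'(z^n_i)\frac{\tau}{2\eta}\,(z^n_{i+1}-z^n_{i-1})$. It satisfies the CFL condition if $|F'(z^n_i)|\,\tau/\eta\le 1$ for all $i\in\mathbb Z$, $n\in\mathbb N$. Fix $a\in\mathbb R$, $h>0$, $\Delta t>0$, an integer $N>1$ and an even integer $r\ge 2$; put $k=h/r$, $dt=\Delta t/r$, $M=Nr$. Let $u_0:\mathbb R\to\mathbb R$. The coarse solution $(w^n_j)$ is the EFC scheme with $\eta=h$, $\tau=\Delta t$, $w^0_j=u_0(a+jh)$; the fine solution $(u^n_i)$ is the EFC scheme with $\eta=k$, $\tau=dt$, $u^0_i=u_0(a+ik)$ (so $w^0_j=u^0_{jr}$). Both are assumed to satisfy the CFL condition. Coarse nodes: $x_j=a+jh$. Interpolant: for a fixed coarse index $j$, set $p_1=x_j$, $p_2=x_{j+1}$, $d_1=w^N_j$, $d_2=w^N_{j+1}$, let $q$ be the cubic with $q(0)=p_1$, $q(1)=p_2$,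 $q'(0)=d_1$, $q'(1)=d_2$, and let $v(t)=q'(t)=(6p_1-6p_2+3d_1+3d_2)t^2+(-6p_1+6p_2-4d_1-2d_2)t+d_1$ for $t\in[0,1]$. For $0\le m\le r$ put $v_m=v(m/r)$ and $u_m=u^M_{jr+m}$ (the fine solution at time step $M$ at the fine node $x_j+mk$). (In this statement $u_0$ denotes $u^M_{jr}$, not the initial function.) *)

theory Defs
  imports "HOL-Analysis.Analysis"
begin

text \<open>EFC scheme (Euler forward in time, centered in space).
  Fd plays the role of F'; eta spatial step, tau time step, z0 initial sequence.\<close>
fun efc :: "(real \<Rightarrow> real) \<Rightarrow> real \<Rightarrow> real \<Rightarrow> (int \<Rightarrow> real) \<Rightarrow> nat \<Rightarrow> int \<Rightarrow> real" where
  "efc Fd eta tau z0 0 i = z0 i"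
| "efc Fd eta tau z0 (Suc n) i =
     efc Fd eta tau z0 n i
     - Fd (efc Fd eta tau z0 n i) * (tau / (2 * eta))
       * (efc Fd eta tau z0 n (i + 1) - efc Fd eta tau z0 n (i - 1))"

definition cfl :: "(real \<Rightarrow> real) \<Rightarrow> real \<Rightarrow> real \<Rightarrow> (int \<Rightarrow> real) \<Rightarrow> bool" where
  "cfl Fd eta tau z0 \<longleftrightarrow>
     (\<forall>n i. \<bar>Fd (efc Fd eta tau z0 n i)\<bar> * tau / eta \<le> 1)"

text \<open>Derivative of the Hermite cubic interpolant q with q(0)=p1, q(1)=p2, q'(0)=d1, q'(1)=d2.\<close>
definition herm_v :: "real \<Rightarrow> real \<Rightarrow> real \<Rightarrow> real \<Rightarrow> real \<Rightarrow> real" where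
  "herm_v p1 p2 d1 d2 t =
     (6*p1 - 6*p2 + 3*d1 + 3*d2) * t^2 + (-6*p1 + 6*p2 - 4*d1 - 2*d2) * t + d1"

end

theory Submission
  imports Defs
begin

text \<open>Under the CFL condition the EFC coefficient is at most 1/2 in absolute value, so one
  step moves each value by at most the largest increment of the current data, and the
  increments grow by at most a factor 3 per step.  Summing, after n steps the solution stays
  within (3^n - 1)/2 times the initial increment bound of its initial data.  The coarse and
  the fine scheme start from the same value at the common node, the coarse increments being
  at most r times the fine ones; since r 3^N \<le> 3^(N r), both drifts are at most
  \<open>\<epsilon>/2\<close>.  Finally v(0) = w^N_j.\<close>

lemma cfl_coefficient_le:
  assumes "eta > 0" "tau > 0" "cfl Fd eta tau z0"
  shows "\<bar>Fd (efc Fd eta tau z0 n i) * (tau / (2 * eta))\<bar> \<le> 1 / 2"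
proof -
  have "\<bar>Fd (efc Fd eta tau z0 n i)\<bar> * tau / eta \<le> 1"
    using assms(3) unfolding cfl_def by blast
  moreover have "\<bar>Fd (efc Fd eta tau z0 n i) * (tau / (2 * eta))\<bar>
      = (\<bar>Fd (efc Fd eta tau z0 n i)\<bar> * tau / eta) / 2"
    using assms(1,2) by (simp add: abs_mult)
  ultimately show ?thesis by simp
qed

lemma efc_step_le:
  assumes "eta > 0" "tau > 0" "cfl Fd eta tau z0"
    and incr: "\<And>i. \<bar>efc Fd eta tau z0 n i - efc Fd eta tau z0 n (i + 1)\<bar> \<le> D"
  shows "\<bar>efc Fd eta tau z0 (Suc n) i - efc Fd eta tau z0 n i\<bar> \<le> D"
proof -
  let ?E = "efc Fd eta tau z0 n" and ?C = "Fd (efc Fd eta tau z0 n i) * (tau / (2 * eta))"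
  have "\<bar>?E (i + 1) - ?E (i - 1)\<bar> \<le> 2 * D"
    using incr[of i] incr[of "i - 1"] by simp
  then have "\<bar>?C\<bar> * \<bar>?E (i + 1) - ?E (i - 1)\<bar> \<le> 1 / 2 * (2 * D)"
    using cfl_coefficient_le[OF assms(1-3)] by (intro mult_mono) auto
  then show ?thesis by (simp add: abs_mult)
qed

lemma efc_increment_le:
  assumes "eta > 0" "tau > 0" "cfl Fd eta tau z0"
    and "\<And>i. \<bar>z0 i - z0 (i + 1)\<bar> \<le> d"
  shows "\<bar>efc Fd eta tau z0 n i - efc Fd eta tau z0 n (i + 1)\<bar> \<le> 3 ^ n * d"
proof (induction n arbitrary: i)
  case 0
  then show ?case using assms(4) by simp
next
  case (Suc n)
  let ?E = "efc Fd eta tau z0 n" and ?E' = "efc Fd eta tau z0 (Suc n)"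
  have step: "\<bar>?E' j - ?E j\<bar> \<le> 3 ^ n * d" for j
    using efc_step_le[OF assms(1-3) Suc.IH] .
  have "3 ^ Suc n * d = 3 * (3 ^ n * d)" by simp
  then show ?case using step[of i] step[of "i + 1"] Suc.IH[of i] by linarith
qed

lemma efc_drift_le:
  assumes "eta > 0" "tau > 0" "cfl Fd eta tau z0"
    and "\<And>i. \<bar>z0 i - z0 (i + 1)\<bar> \<le> d"
  shows "\<bar>efc Fd eta tau z0 n i - z0 i\<bar> \<le> (3 ^ n - 1) / 2 * d"
proof (induction n)
  case 0
  then show ?case by simp
next
  case (Suc n)
  have "\<bar>efc Fd eta tau z0 (Suc n) i - efc Fd eta tau z0 n i\<bar> \<le> 3 ^ n * d"
    using efc_step_le[OF assms(1-3) efc_increment_le[OF assms]] .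
  moreover have "(3 ^ n - 1) / 2 * d + 3 ^ n * d = (3 ^ Suc n - 1) / 2 * d"
    by (simp add: field_simps)
  ultimately show ?case using Suc.IH by linarith
qed

lemma increments_telescope:
  fixes f :: "int \<Rightarrow> real"
  assumes "\<And>i. \<bar>f i - f (i + 1)\<bar> \<le> d"
  shows "\<bar>f i - f (i + int m)\<bar> \<le> real m * d"
proof (induction m)
  case 0
  then show ?case by simp
next
  case (Suc m)
  have "\<bar>f (i + int m) - f (i + int m + 1)\<bar> \<le> d" by (rule assms)
  with Suc show ?case by (simp add: algebra_simps)
qed

lemma efc_drift_le_half:
  assumes "eta > 0" "tau > 0" "cfl Fd eta tau z0" "\<epsilon> \<ge> 0" "k \<ge> 0"
    and growth: "k * 3 ^ n \<le> 3 ^ m"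
    and incr: "\<And>i. \<bar>z0 i - z0 (i + 1)\<bar> \<le> k * (\<epsilon> / 3 ^ m)"
  shows "\<bar>efc Fd eta tau z0 n i - z0 i\<bar> \<le> \<epsilon> / 2"
proof -
  have "\<bar>efc Fd eta tau z0 n i - z0 i\<bar> \<le> (3 ^ n - 1) / 2 * (k * (\<epsilon> / 3 ^ m))"
    using efc_drift_le[OF assms(1-3) incr] .
  also have "\<dots> \<le> 3 ^ n / 2 * (k * (\<epsilon> / 3 ^ m))"
    using assms(4,5) by (intro mult_right_mono) auto
  also have "\<dots> = (k * 3 ^ n) * (\<epsilon> / 3 ^ m) / 2" by (simp add: field_simps)
  also have "\<dots> \<le> 3 ^ m * (\<epsilon> / 3 ^ m) / 2"
    using growth assms(4) by (intro divide_right_mono mult_right_mono) auto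
  also have "\<dots> = \<epsilon> / 2" by simp
  finally show ?thesis .
qed

lemma mult_power_le_power_mult:
  fixes b :: real
  assumes "b \<ge> 2" "N \<ge> 1" "r \<ge> 1"
  shows "real r * b ^ N \<le> b ^ (N * r)"
proof -
  have "r \<le> 2 ^ (r - 1)"
    using less_exp[of "r - 1"] assms(3) by linarith
  then have "real r \<le> 2 ^ (r - 1)"
    using of_nat_mono[of r "2 ^ (r - 1)", where 'a = real] by simp
  also have "\<dots> \<le> b ^ (r - 1)" using assms(1) by (simp add: power_mono)
  also have "\<dots> \<le> b ^ (N * (r - 1))"
    using assms by (intro power_increasing) auto
  finally have "real r * b ^ N \<le> b ^ N * b ^ (N * (r - 1))"
    using assms(1) by (simp add: mult.commute)
  also have "\<dots> = b ^ (N * r)"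
    using assms(3) by (simp add: power_add[symmetric] algebra_simps)
  finally show ?thesis .
qed

lemma herm_v_0 [simp]: "herm_v p1 p2 d1 d2 0 = d1"
  by (simp add: herm_v_def)

theorem proposition7:
  fixes F Fd :: "real \<Rightarrow> real" and a h \<Delta>t \<epsilon> :: real and N r :: nat
    and u\<^sub>0 :: "real \<Rightarrow> real"
  assumes F_deriv: "\<And>x. (F has_real_derivative Fd x) (at x)"
    and Fd_cont: "continuous_on UNIV Fd"
    and h_pos: "h > 0" and dt_pos: "\<Delta>t > 0"
    and N_gt: "N > 1" and r_even: "even r" and r_ge: "r \<ge> 2"
    and cfl_coarse: "cfl Fd h \<Delta>t (\<lambda>j. u\<^sub>0 (a + real_of_int j * h))"
    and cfl_fine: "cfl Fd (h / real r) (\<Delta>t / real r) (\<lambda>i. u\<^sub>0 (a + real_of_int i * (h / real r)))"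
    and eps_pos: "\<epsilon> > 0"
    and small: "\<And>i::int. \<bar>u\<^sub>0 (a + real_of_int i * (h / real r))
                          - u\<^sub>0 (a + real_of_int (i + 1) * (h / real r))\<bar> \<le> \<epsilon> / 3 ^ (N * r)"
  shows "\<forall>j::int.
     (let w = efc Fd h \<Delta>t (\<lambda>j. u\<^sub>0 (a + real_of_int j * h));
          u = efc Fd (h / real r) (\<Delta>t / real r) (\<lambda>i. u\<^sub>0 (a + real_of_int i * (h / real r)));
          v = herm_v (a + real_of_int j * h) (a + real_of_int (j + 1) * h) (w N j) (w N (j + 1))
      in \<bar>v 0 - u (N * r) (j * int r)\<bar> \<le> \<epsilon> \<and> \<bar>w N j - u (N * r) (j * int r)\<bar> \<le> \<epsilon>)"
proof
  fix j :: int
  define U where "U = (\<lambda>i::int. u\<^sub>0 (a + real_of_int i * (h / real r)))"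
  define W where "W = (\<lambda>j::int. u\<^sub>0 (a + real_of_int j * h))"
  define \<delta> where "\<delta> = \<epsilon> / 3 ^ (N * r)"
  have r_pos: "real r > 0" using r_ge by simp
  have W_eq_U: "W i = U (i * int r)" for i
    unfolding W_def U_def using r_pos by simp
  have U_incr: "\<bar>U i - U (i + 1)\<bar> \<le> \<delta>" for i
    using small unfolding U_def \<delta>_def by simp
  have W_incr: "\<bar>W i - W (i + 1)\<bar> \<le> real r * \<delta>" for i
    using increments_telescope[of U \<delta> "i * int r" r, OF U_incr]
    by (simp add: W_eq_U algebra_simps)
  have fine: "\<bar>efc Fd (h / real r) (\<Delta>t / real r) U (N * r) (j * int r) - U (j * int r)\<bar> \<le> \<epsilon> / 2"
    using h_pos dt_pos r_pos eps_pos U_incr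
    by (intro efc_drift_le_half[OF _ _ cfl_fine[folded U_def], where k = 1 and m = "N * r"])
      (auto simp: \<delta>_def)
  have coarse: "\<bar>efc Fd h \<Delta>t W N j - W j\<bar> \<le> \<epsilon> / 2"
    using mult_power_le_power_mult[of 3 N r] N_gt r_ge eps_pos W_incr
    by (intro efc_drift_le_half[OF h_pos dt_pos cfl_coarse[folded W_def],
          where k = "real r" and m = "N * r"]) (auto simp: \<delta>_def)
  have "\<bar>efc Fd h \<Delta>t W N j - efc Fd (h / real r) (\<Delta>t / real r) U (N * r) (j * int r)\<bar> \<le> \<epsilon>"
    using fine coarse W_eq_U[of j] by linarith
  then show "let w = efc Fd h \<Delta>t (\<lambda>j. u\<^sub>0 (a + real_of_int j * h));
          u = efc Fd (h / real r) (\<Delta>t / real r) (\<lambda>i. u\<^sub>0 (a + real_of_int i * (h / real r)));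
          v = herm_v (a + real_of_int j * h) (a + real_of_int (j + 1) * h) (w N j) (w N (j + 1))
      in \<bar>v 0 - u (N * r) (j * int r)\<bar> \<le> \<epsilon> \<and> \<bar>w N j - u (N * r) (j * int r)\<bar> \<le> \<epsilon>"
    unfolding Let_def U_def[symmetric] W_def[symmetric] by simp
qed

end
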